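(* Let $p\in\mathbb{C}[x]$ of degree $n\ge 2$ have $k\ge2$ distinct roots, let $\hat z_1,\dots,\hat z_n\in\mathbb{C}$, $\hat p:=p_n\prod_{j=1}^n(x-\hat z_j)$, and suppose $\|p-\hat p\|_1\le 2^{-b}\|p\|_1$, where $b$ is a power of two with $b\ge\max(8n,n\log n)$ and, for all $i=1,\dots,k$, $$2^{-b/(2m_i)}\le \frac{1}{2n^2},\qquad 2^{-b/(2m_i)}\le\frac{\sigma_i}{2n},\qquad 2^{-b/2}\le \frac{|P_i|}{16(n+1)2^{\tau_p}M(z_i)^n}.$$ Then for every $i$, the disk $\Delta(z_i,2^{-b/(2m_i)})$ contains exactly $m_i$ of the points $\hat z_1,\dots,\hat z_n$ (counted with repetition by index). Moreover, for $i\ne j$ and any $\hat z\in\Delta(z_i,2^{-b/(2m_i)})$, $\hat z'\in\Delta(z_j,2^{-b/(2m_j)})$ among these points, $$\Big(1-\frac1n\Big)|z_i-z_j|\le|\hat z-\hat z'|\le\Big(1+\frac1n\Big)|z_i-z_j|.$$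
   Context: Logarithms are base 2; $M(x)=\max(1,|x|)$; $\Delta(z,r)$ is the closed disk of center $z$ and radius $r$. Write $p=\sum_i p_ix^i=p_n\prod_{j=1}^k(x-z_j)^{m_j}$ with distinct roots $z_j$ of multiplicities $m_j$; $\|p\|_1=\sum_i|p_i|$; $\tau_p$ is the smallest non-negative integer with $|p_i|/|p_n|\le2^{\tau_p}$ for all $i<n$; $\sigma_i:=\min_{j\ne i}|z_i-z_j|$; $P_i:=\prod_{j\ne i}(z_i-z_j)^{m_j}$. *)

theory Defs
  imports "HOL-Analysis.Analysis" "HOL-Computational_Algebra.Polynomial"
begin

definition root_set :: "complex poly \<Rightarrow> complex set" where
  "root_set p = {z. poly p z = 0}"

definition norm1 :: "complex poly \<Rightarrow> real" where
  "norm1 p = (\<Sum>i\<le>degree p. cmod (coeff p i))"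

definition tau :: "complex poly \<Rightarrow> nat" where
  "tau p = (LEAST t::nat. \<forall>i<degree p. cmod (coeff p i) / cmod (lead_coeff p) \<le> 2 ^ t)"

definition Mx :: "complex \<Rightarrow> real" where
  "Mx x = max 1 (cmod x)"

definition sep :: "complex poly \<Rightarrow> complex \<Rightarrow> real" where
  "sep p z = Min ((\<lambda>w. cmod (z - w)) ` (root_set p - {z}))"

definition Pprod :: "complex poly \<Rightarrow> complex \<Rightarrow> complex" where
  "Pprod p z = (\<Prod>w\<in>root_set p - {z}. (z - w) ^ order w p)"

end

theory Submission
  imports Defs "HOL-Computational_Algebra.Fundamental_Theorem_Algebra"
begin

text \<open>
  Near a root z of multiplicity m, p behaves like lc * P_z * (x - z)^m, and the hypotheses make
  |p - ph| smaller than |p| on the annulus r <= |x - z| <= 2 r (where r = 2^(-b/(2m))); in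
  particular no approximate root lies in that annulus. The roots inside the disk are counted
  without Rouche's theorem: the product of |q| over the N points u with u^N = t^N equals
  |lc|^N times the product of |t^N - y^N| over the roots z + y of q, which for N = 30 n is
  t^(N * #roots inside) times a quantity independent of t, up to a factor 2^(+-n). Comparing p
  and ph on the circles of radii 21 r / 20 and 39 r / 20 shows that ph has at least m roots in
  the disk of radius r. The disks are disjoint and ph has n roots, so each contains exactly m.
  The distance estimates follow from the triangle inequality, since r_z + r_w <= |z - w| / n.
\<close>

lemma poly_eq_lead_coeff_prod_roots:
  fixes q :: "complex poly"
  shows "poly q y = lead_coeff q * (\<Prod>x\<in>{x. poly q x = 0}. (y - x) ^ order x q)"
proof -
  have "poly (smult (lead_coeff q) (\<Prod>z|poly q z = 0. [:-z, 1:] ^ order z q)) y = poly q y"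
    by (subst complex_poly_decompose) simp
  thus ?thesis by (simp add: poly_prod)
qed

lemma degree_eq_sum_order:
  fixes q :: "complex poly"
  assumes "q \<noteq> 0"
  shows "degree q = (\<Sum>x\<in>{x. poly q x = 0}. order x q)"
proof -
  have "degree q = degree (smult (lead_coeff q) (\<Prod>z|poly q z = 0. [:-z, 1:] ^ order z q))"
    by (subst complex_poly_decompose) simp
  also have "\<dots> = (\<Sum>x\<in>{x. poly q x = 0}. order x q)"
    using assms by (simp add: degree_prod_sum_eq degree_power_eq)
  finally show ?thesis .
qed

lemma prod_nth_roots_diff:
  fixes c y :: complex
  assumes c: "c \<noteq> 0" and N: "N > 0"
  shows "(\<Prod>u\<in>{u. u ^ N = c}. y - u) = y ^ N - c"
proof -
  define q where "q = monom (1::complex) N + [:-c:]"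
  define Z where "Z = {u::complex. u ^ N = c}"
  have poly_q: "poly q x = x ^ N - c" for x by (simp add: q_def poly_monom)
  have "degree q = N" using N by (simp add: q_def degree_monom_eq degree_add_eq_left)
  moreover have lead_q: "lead_coeff q = 1" using N \<open>degree q = N\<close> by (simp add: q_def coeff_pCons split: nat.split)
  ultimately have q: "q \<noteq> 0" "degree q = N" by auto
  have roots: "{x. poly q x = 0} = Z" by (simp add: poly_q Z_def)
  have "finite Z" "card Z = N" using c N by (auto simp: Z_def card_nth_roots)
  have order_ge: "order x q \<ge> 1" if "x \<in> Z" for x
    using that q order_root[of q x] by (simp add: Suc_le_eq poly_q Z_def)
  \<comment> \<open>the N distinct roots exhaust the degree, so each is simple\<close>
  have order_eq: "order x q = 1" if "x \<in> Z" for x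
  proof (rule ccontr)
    assume "order x q \<noteq> 1"
    with order_ge[OF that] have "1 < order x q" by simp
    hence "(\<Sum>x\<in>Z. 1) < (\<Sum>x\<in>Z. order x q)"
      using \<open>finite Z\<close> that order_ge by (intro sum_strict_mono_ex1) auto
    thus False using degree_eq_sum_order[OF q(1)] q(2) roots \<open>card Z = N\<close> by simp
  qed
  have "poly q y = (\<Prod>u\<in>Z. y - u)"
    using poly_eq_lead_coeff_prod_roots[of q y] lead_q roots order_eq by simp
  thus ?thesis by (simp add: poly_q Z_def)
qed

definition circle_roots :: "real \<Rightarrow> nat \<Rightarrow> complex set" where
  "circle_roots t N = {u. u ^ N = of_real t ^ N}"

lemma card_circle_roots: "t > 0 \<Longrightarrow> N > 0 \<Longrightarrow> card (circle_roots t N) = N"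
  unfolding circle_roots_def by (rule card_nth_roots) auto

lemma norm_circle_roots:
  assumes "u \<in> circle_roots t N" "t \<ge> 0" "N > 0"
  shows "cmod u = t"
proof -
  have "cmod u ^ N = t ^ N"
    using assms by (simp add: circle_roots_def norm_power flip: norm_power[of u])
  thus ?thesis by (rule power_eq_imp_eq_base) (use assms in auto)
qed

lemma prod_circle_roots_norm_diff:
  assumes "t > 0" "N > 0"
  shows "(\<Prod>u\<in>circle_roots t N. cmod (u - y)) = cmod (of_real t ^ N - y ^ N)"
proof -
  have "(\<Prod>u\<in>circle_roots t N. cmod (u - y)) = (\<Prod>u\<in>circle_roots t N. cmod (y - u))"
    by (intro prod.cong refl norm_minus_commute)
  also have "\<dots> = cmod (\<Prod>u\<in>circle_roots t N. y - u)"
    by (rule prod_norm)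
  also have "\<dots> = cmod (y ^ N - of_real t ^ N)"
    using prod_nth_roots_diff[of "of_real t ^ N" N y] assms by (simp add: circle_roots_def)
  also have "\<dots> = cmod (of_real t ^ N - y ^ N)"
    by (rule norm_minus_commute)
  finally show ?thesis .
qed

lemma norm_power_diff_le_max:
  fixes x y :: complex
  shows "cmod (x ^ N - y ^ N) \<le> 2 * max (cmod x) (cmod y) ^ N"
proof -
  have "cmod (x ^ N - y ^ N) \<le> cmod x ^ N + cmod y ^ N"
    using norm_triangle_ineq4[of "x ^ N" "y ^ N"] by (simp add: norm_power)
  also have "\<dots> \<le> 2 * max (cmod x) (cmod y) ^ N"
    using power_mono[of "cmod x" "max (cmod x) (cmod y)" N] power_mono[of "cmod y" "max (cmod x) (cmod y)" N]
    by simp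
  finally show ?thesis .
qed

lemma norm_power_diff_ge_max:
  fixes x y :: complex
  assumes "2 * min (cmod x) (cmod y) ^ N \<le> max (cmod x) (cmod y) ^ N"
  shows "max (cmod x) (cmod y) ^ N / 2 \<le> cmod (x ^ N - y ^ N)"
proof -
  have "max (cmod x) (cmod y) ^ N - min (cmod x) (cmod y) ^ N \<le> \<bar>cmod x ^ N - cmod y ^ N\<bar>"
    by (cases "cmod x \<le> cmod y") (simp_all add: max_def min_def)
  also have "\<dots> \<le> cmod (x ^ N - y ^ N)"
    using norm_triangle_ineq3[of "x ^ N" "y ^ N"] by (simp add: norm_power)
  finally show ?thesis using assms by linarith
qed

lemma norm1_nonneg: "norm1 q \<ge> 0"
  by (simp add: norm1_def sum_nonneg)

lemma Mx_ge_1: "Mx x \<ge> 1"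
  by (simp add: Mx_def)

lemma norm_poly_le_norm1: "cmod (poly q x) \<le> norm1 q * Mx x ^ degree q"
proof -
  have M1: "1 \<le> Mx x" "cmod x \<le> Mx x" by (auto simp: Mx_def)
  have "cmod (poly q x) = cmod (\<Sum>i\<le>degree q. coeff q i * x ^ i)" by (simp add: poly_altdef)
  also have "\<dots> \<le> (\<Sum>i\<le>degree q. cmod (coeff q i) * cmod x ^ i)"
    by (rule order_trans[OF norm_sum]) (simp add: norm_mult norm_power)
  also have "\<dots> \<le> (\<Sum>i\<le>degree q. cmod (coeff q i) * Mx x ^ degree q)"
  proof (intro sum_mono mult_left_mono)
    fix i assume "i \<in> {..degree q}"
    hence "cmod x ^ i \<le> Mx x ^ i" by (intro power_mono) (use M1 in auto)
    also have "\<dots> \<le> Mx x ^ degree q" using \<open>i \<in> _\<close> M1 by (intro power_increasing) auto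
    finally show "cmod x ^ i \<le> Mx x ^ degree q" .
  qed auto
  also have "\<dots> = norm1 q * Mx x ^ degree q" by (simp add: norm1_def sum_distrib_right)
  finally show ?thesis .
qed

lemma norm1_le_tau:
  assumes "q \<noteq> 0"
  shows "norm1 q \<le> (real (degree q) + 1) * 2 ^ tau q * cmod (lead_coeff q)"
proof -
  have lead: "cmod (lead_coeff q) > 0" using assms by simp
  define A where "A = (\<Sum>i<degree q. cmod (coeff q i) / cmod (lead_coeff q))"
  obtain t :: nat where "A < 2 ^ t" using real_arch_pow[of 2 A] by auto
  have "\<forall>i<degree q. cmod (coeff q i) / cmod (lead_coeff q) \<le> 2 ^ t"
  proof (intro allI impI)
    fix i assume "i < degree q"
    hence "cmod (coeff q i) / cmod (lead_coeff q) \<le> A"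
      unfolding A_def by (intro member_le_sum) auto
    thus "cmod (coeff q i) / cmod (lead_coeff q) \<le> 2 ^ t" using \<open>A < 2 ^ t\<close> by simp
  qed
  hence tau: "\<forall>i<degree q. cmod (coeff q i) / cmod (lead_coeff q) \<le> 2 ^ tau q"
    unfolding tau_def by (rule LeastI)
  have coeff_le: "cmod (coeff q i) \<le> 2 ^ tau q * cmod (lead_coeff q)" if "i \<le> degree q" for i
  proof (cases "i = degree q")
    case True
    thus ?thesis using lead by simp
  next
    case False
    with that tau have "cmod (coeff q i) / cmod (lead_coeff q) \<le> 2 ^ tau q" by simp
    thus ?thesis using lead by (simp add: divide_le_eq)
  qed
  have "norm1 q \<le> (\<Sum>i\<le>degree q. 2 ^ tau q * cmod (lead_coeff q))"
    unfolding norm1_def by (intro sum_mono coeff_le) auto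
  thus ?thesis by (simp add: algebra_simps)
qed

lemma Mx_le_mult_dist: "Mx x \<le> Mx z * (1 + cmod (x - z))"
proof -
  have "cmod x \<le> cmod z + cmod (x - z)" by (metis norm_triangle_sub add.commute)
  moreover have "1 \<le> Mx z" "cmod z \<le> Mx z" by (auto simp: Mx_def)
  moreover have "cmod (x - z) \<le> Mx z * cmod (x - z)"
    using \<open>1 \<le> Mx z\<close> by (simp add: mult_le_cancel_right1)
  ultimately have "Mx x \<le> Mx z + Mx z * cmod (x - z)"
    unfolding Mx_def[of x] using norm_ge_zero[of "x - z"] by (intro max.boundedI) linarith+
  thus ?thesis by (simp add: distrib_left)
qed

lemma exp_neg_one_le_power_one_minus_inverse:
  assumes "n \<ge> (2::nat)"
  shows "exp (-1) \<le> (1 - 1 / real n) ^ (n - 1)"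
proof -
  define k where "k = n - 1"
  have k: "k \<ge> 1" "real n = real k + 1" using assms by (auto simp: k_def)
  have "1 + 1 / real k \<le> exp (1 / real k)" by (rule exp_ge_add_one_self)
  hence "inverse (exp (1 / real k)) \<le> inverse (1 + 1 / real k)"
    using k by (intro le_imp_inverse_le) (auto simp: add_pos_pos)
  also have "inverse (1 + 1 / real k) = 1 - 1 / real n"
    using k by (simp add: field_simps)
  finally have "exp (- (1 / real k)) \<le> 1 - 1 / real n" by (simp add: exp_minus)
  hence "exp (- (1 / real k)) ^ k \<le> (1 - 1 / real n) ^ k" by (intro power_mono) auto
  moreover have "exp (- (1 / real k)) ^ k = exp (-1)"
    using k by (simp add: exp_of_nat_mult[symmetric])
  ultimately show ?thesis by (simp add: k_def)
qed

lemma power_one_plus_le_exp_half: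
  assumes "s \<ge> (0::real)" "real n * s \<le> 1/2"
  shows "(1 + s) ^ n \<le> exp (1/2)"
proof -
  have "(1 + s) ^ n \<le> exp s ^ n" using assms by (intro power_mono) auto
  also have "\<dots> = exp (real n * s)" by (simp add: exp_of_nat_mult)
  also have "\<dots> \<le> exp (1/2)" using assms by simp
  finally show ?thesis .
qed

lemma exp_three_halves_le: "exp (1::real) * exp (1/2) \<le> 21/4"
proof -
  have "exp (1/2::real) ^ 2 = exp 1" by (simp add: exp_of_nat_mult[symmetric])
  also have "\<dots> \<le> (7/4)^2" using exp_le by (simp add: power2_eq_square)
  finally have "exp (1/2::real) \<le> 7/4"
    by (rule power2_le_imp_le) simp
  hence "exp (1::real) * exp (1/2) \<le> 3 * (7/4)"
    using exp_le by (intro mult_mono) auto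
  thus ?thesis by simp
qed

lemma power_ratio_le:
  fixes s l A B C Q W :: real
  assumes s: "s > 0" and l: "l > 0" and Q: "Q > 0" and C: "C \<ge> 0" and "c \<le> m"
    and small: "s ^ c * W \<le> A * s ^ m * Q"
    and large: "B * (l * s) ^ m * Q \<le> C * (l * s) ^ c * W"
  shows "B * l ^ (m - c) \<le> A * C"
proof -
  define k where "k = m - c"
  have m: "m = c + k" using \<open>c \<le> m\<close> by (simp add: k_def)
  have "s ^ c * W \<le> s ^ c * (A * s ^ k * Q)"
    using small by (simp add: m power_add mult_ac)
  hence W: "W \<le> A * s ^ k * Q" using s by simp
  have "(l * s) ^ c * (B * l ^ k * s ^ k * Q) \<le> (l * s) ^ c * (C * W)"
    using large by (simp add: m power_add power_mult_distrib mult_ac)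
  hence "B * l ^ k * s ^ k * Q \<le> C * W" using s l by simp
  also have "\<dots> \<le> C * (A * s ^ k * Q)" using W C by (intro mult_left_mono)
  finally have "(B * l ^ k) * (s ^ k * Q) \<le> (A * C) * (s ^ k * Q)" by (simp add: mult_ac)
  thus ?thesis using s Q by (simp add: k_def)
qed

lemma two_circle_count_absurd:
  assumes "n \<ge> 1" "k \<ge> 1"
  shows "\<not> (4/5) ^ (30 * n) * (39/21) ^ (30 * n * k) \<le> 16 ^ n * (21/16::real) ^ (30 * n)"
proof
  assume le: "(4/5) ^ (30 * n) * (39/21) ^ (30 * n * k) \<le> 16 ^ n * (21/16::real) ^ (30 * n)"
  have "((4/5) * (39/21::real)) ^ (30 * n) = (4/5) ^ (30 * n) * (39/21) ^ (30 * n)"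
    by (rule power_mult_distrib)
  also have "\<dots> \<le> (4/5) ^ (30 * n) * (39/21) ^ (30 * n * k)"
    using assms by (intro mult_left_mono power_increasing) auto
  also note le
  finally have "((4/5) * (39/21::real)) ^ (30 * n) \<le> 16 ^ n * (21/16) ^ (30 * n)" .
  hence "(((4/5) * (39/21::real)) ^ 30) ^ n \<le> (16 * (21/16) ^ 30) ^ n"
    by (simp add: power_mult power_mult_distrib)
  moreover have "16 * (21/16) ^ 30 < ((4/5) * (39/21::real)) ^ 30"
  proof -
    have "(16::real) * 21 ^ 30 * 35 ^ 30 < 52 ^ 30 * 16 ^ 30" by simp
    thus ?thesis by (simp add: power_divide field_simps)
  qed
  hence "(16 * (21/16) ^ 30) ^ n < (((4/5) * (39/21::real)) ^ 30) ^ n"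
    using assms by (intro power_strict_mono) auto
  ultimately show False by simp
qed

lemma prod_mult_power_power:
  fixes a :: "'a \<Rightarrow> real" and e :: "'a \<Rightarrow> nat"
  shows "(\<Prod>w\<in>A. (k * a w ^ N) ^ e w) = k ^ (\<Sum>w\<in>A. e w) * (\<Prod>w\<in>A. a w ^ e w) ^ N"
  by (simp add: power_mult_distrib prod.distrib power_sum prod_power_distrib
      mult.commute[of N] power_mult flip: power_mult)

locale approx_roots =
  fixes p :: "complex poly" and zh :: "nat \<Rightarrow> complex" and b :: nat and n :: nat
    and ph :: "complex poly" and r :: "complex \<Rightarrow> real"
  assumes n_def: "n = degree p"
    and ph_def: "ph = smult (lead_coeff p) (\<Prod>j\<in>{1..n}. [:- zh j, 1:])"
    and r_def: "r = (\<lambda>z. (2::real) powr (- real b / (2 * real (order z p))))"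
    and n_ge_2: "n \<ge> 2"
    and close: "norm1 (p - ph) \<le> 2 powr (- real b) * norm1 p"
    and r_le_inverse_square: "\<And>z. z \<in> root_set p \<Longrightarrow> r z \<le> 1 / (2 * real n ^ 2)"
    and r_le_sep: "\<And>z. z \<in> root_set p \<Longrightarrow> r z \<le> sep p z / (2 * real n)"
    and Pprod_large: "\<And>z. z \<in> root_set p \<Longrightarrow>
          2 powr (- real b / 2) \<le> cmod (Pprod p z) / (16 * (real n + 1) * 2 ^ tau p * Mx z ^ n)"
begin

abbreviation "lc \<equiv> lead_coeff p"

definition cluster :: "complex \<Rightarrow> nat set" where
  "cluster z = {j\<in>{1..n}. zh j \<in> cball z (r z)}"

lemma p_nonzero: "p \<noteq> 0" using n_ge_2 n_def by auto

lemma finite_root_set: "finite (root_set p)"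
  using p_nonzero by (simp add: root_set_def poly_roots_finite)

lemma n_eq_sum_order: "n = (\<Sum>w\<in>root_set p. order w p)"
  unfolding root_set_def n_def by (rule degree_eq_sum_order[OF p_nonzero])

lemma order_ge_1: "z \<in> root_set p \<Longrightarrow> order z p \<ge> 1"
  using p_nonzero order_root[of p z] by (simp add: root_set_def Suc_le_eq)

lemma poly_p_eq_root_factor:
  assumes "z \<in> root_set p"
  shows "poly p x = lc * ((x - z) ^ order z p * (\<Prod>w\<in>root_set p - {z}. (x - w) ^ order w p))"
  using poly_eq_lead_coeff_prod_roots[of p x]
    prod.remove[OF finite_root_set assms, of "\<lambda>w. (x - w) ^ order w p"]
  by (simp add: root_set_def)

lemma poly_ph: "poly ph x = lc * (\<Prod>j\<in>{1..n}. x - zh j)"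
  by (simp add: ph_def poly_prod)

lemma degree_ph_le: "degree ph \<le> n"
proof -
  have "degree (\<Prod>j\<in>{1..n}. [:- zh j, 1:]) \<le> (\<Sum>j\<in>{1..n}. degree [:- zh j, 1:])"
    using degree_prod_sum_le[of "{1..n}" "\<lambda>j. [:- zh j, 1:]"] by (simp add: o_def)
  thus ?thesis by (simp add: ph_def)
qed

lemma r_pos: "r z > 0" by (simp add: r_def)

lemma r_power_order: "z \<in> root_set p \<Longrightarrow> r z ^ order z p = 2 powr (- real b / 2)"
  using order_ge_1[of z] by (simp add: r_def powr_realpow[symmetric] powr_powr)

lemma two_n_r_le_dist:
  assumes "z \<in> root_set p" "w \<in> root_set p" "w \<noteq> z"
  shows "2 * real n * r z \<le> cmod (z - w)"
proof -
  have "sep p z \<le> cmod (z - w)"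
    unfolding sep_def using assms finite_root_set by (intro Min_le) auto
  thus ?thesis using r_le_sep[OF assms(1)] n_ge_2 by (simp add: field_simps)
qed

lemma norm_Pprod: "cmod (Pprod p z) = (\<Prod>w\<in>root_set p - {z}. cmod (z - w) ^ order w p)"
  by (simp add: Pprod_def norm_power flip: prod_norm)

lemma norm_Pprod_pos: "cmod (Pprod p z) > 0"
  unfolding norm_Pprod using finite_root_set by (intro prod_pos) auto

lemma sum_order_other_roots:
  "z \<in> root_set p \<Longrightarrow> (\<Sum>w\<in>root_set p - {z}. order w p) = n - order z p"
  using n_eq_sum_order finite_root_set by (simp add: sum_diff1_nat)

lemma norm_poly_diff_le: "cmod (poly (p - ph) x) \<le> 2 powr (- real b) * norm1 p * Mx x ^ n"
proof -
  have M: "1 \<le> Mx x" by (rule Mx_ge_1)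
  have "degree (p - ph) \<le> n" using degree_ph_le n_def by (intro degree_diff_le) auto
  hence "cmod (poly (p - ph) x) \<le> norm1 (p - ph) * Mx x ^ n"
    using norm_poly_le_norm1[of "p - ph" x] norm1_nonneg[of "p - ph"] M
    by (smt (verit) mult_left_mono power_increasing)
  also have "\<dots> \<le> 2 powr (- real b) * norm1 p * Mx x ^ n"
    using close M by (intro mult_right_mono) auto
  finally show ?thesis .
qed

lemma n_mult_dist_le_half:
  assumes z: "z \<in> root_set p" and x: "cmod (x - z) \<le> 2 * r z"
  shows "real n * cmod (x - z) \<le> 1/2"
proof -
  have n: "real n \<ge> 2" using n_ge_2 by simp
  have "real n * (real n * cmod (x - z)) \<le> real n * (real n * (2 * r z))"
    using x n by (intro mult_left_mono) auto
  also have "\<dots> \<le> 1"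
    using r_le_inverse_square[OF z] n by (simp add: field_simps power2_eq_square)
  finally have "real n * cmod (x - z) \<le> 1 / real n" using n by (simp add: field_simps)
  also have "\<dots> \<le> 1/2" using n by (simp add: field_simps)
  finally show ?thesis .
qed

lemma dist_other_root_ge:
  assumes z: "z \<in> root_set p" and w: "w \<in> root_set p - {z}" and x: "cmod (x - z) \<le> 2 * r z"
  shows "(1 - 1 / real n) * cmod (z - w) \<le> cmod (x - w)"
proof -
  have n: "real n > 0" using n_ge_2 by simp
  have "real n * cmod (x - z) \<le> real n * (2 * r z)" using x n by simp
  also have "\<dots> \<le> cmod (z - w)" using two_n_r_le_dist[OF z] w by (simp add: mult_ac)
  finally have "cmod (x - z) \<le> cmod (z - w) / real n" using n by (simp add: field_simps)
  moreover have "cmod (z - w) - cmod (x - z) \<le> cmod (x - w)"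
    using norm_triangle_ineq2[of "z - w" "z - x"] by (simp add: norm_minus_commute)
  ultimately show ?thesis by (simp add: algebra_simps)
qed

lemma norm_poly_ge_near_root:
  assumes z: "z \<in> root_set p" and x: "cmod (x - z) \<le> 2 * r z"
  shows "cmod lc * cmod (x - z) ^ order z p * cmod (Pprod p z) * exp (-1) \<le> cmod (poly p x)"
proof -
  define m where "m = order z p"
  define q where "q = 1 - 1 / real n"
  have q: "0 \<le> q" "q \<le> 1" using n_ge_2 by (auto simp: q_def field_simps)
  have "(\<Prod>w\<in>root_set p - {z}. q ^ order w p) = q ^ (n - m)"
    by (simp add: sum_order_other_roots[OF z] m_def flip: power_sum)
  hence "cmod (Pprod p z) * q ^ (n - m) = (\<Prod>w\<in>root_set p - {z}. (q * cmod (z - w)) ^ order w p)"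
    by (simp add: norm_Pprod power_mult_distrib prod.distrib mult.commute)
  also have "\<dots> \<le> (\<Prod>w\<in>root_set p - {z}. cmod (x - w) ^ order w p)"
    using dist_other_root_ge[OF z _ x] q
    by (intro prod_mono conjI power_mono mult_nonneg_nonneg) (auto simp: q_def)
  finally have others: "cmod (Pprod p z) * q ^ (n - m) \<le> (\<Prod>w\<in>root_set p - {z}. cmod (x - w) ^ order w p)" .
  have "exp (-1) \<le> q ^ (n - 1)"
    unfolding q_def by (rule exp_neg_one_le_power_one_minus_inverse[OF n_ge_2])
  also have "\<dots> \<le> q ^ (n - m)" using q order_ge_1[OF z] by (intro power_decreasing) (auto simp: m_def)
  finally have "cmod (Pprod p z) * exp (-1) \<le> (\<Prod>w\<in>root_set p - {z}. cmod (x - w) ^ order w p)"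
    using others norm_Pprod_pos[of z] by (smt (verit) mult_left_mono)
  hence "cmod lc * cmod (x - z) ^ m * (cmod (Pprod p z) * exp (-1))
      \<le> cmod lc * cmod (x - z) ^ m * (\<Prod>w\<in>root_set p - {z}. cmod (x - w) ^ order w p)"
    by (intro mult_left_mono) auto
  also have "\<dots> = cmod (poly p x)"
    by (simp add: poly_p_eq_root_factor[OF z] m_def norm_mult norm_power flip: prod_norm)
  finally show ?thesis by (simp add: m_def mult_ac)
qed

lemma norm_poly_diff_le_r_power:
  assumes z: "z \<in> root_set p" and x: "cmod (x - z) \<le> 2 * r z"
  shows "cmod (poly (p - ph) x) \<le> r z ^ order z p * cmod (Pprod p z) * cmod lc * exp (1/2) / 16"
proof -
  define K where "K = (real n + 1) * 2 ^ tau p * Mx z ^ n"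
  have K: "K > 0" by (simp add: K_def Mx_def)
  have Pprod: "16 * K * 2 powr (- real b / 2) \<le> cmod (Pprod p z)"
    using Pprod_large[OF z] K by (simp add: K_def field_simps)
  have "Mx x ^ n \<le> (Mx z * (1 + cmod (x - z))) ^ n"
    using Mx_le_mult_dist[of x z] by (intro power_mono) (auto simp: Mx_def)
  also have "\<dots> \<le> Mx z ^ n * exp (1/2)"
    using power_one_plus_le_exp_half[of "cmod (x - z)" n] n_mult_dist_le_half[OF z x]
    by (simp add: power_mult_distrib Mx_def)
  finally have Mx_x: "Mx x ^ n \<le> Mx z ^ n * exp (1/2)" .
  have halves: "(2::real) powr (- real b) = 2 powr (- real b / 2) * 2 powr (- real b / 2)"
    by (simp flip: powr_add)
  have "cmod (poly (p - ph) x) \<le> 2 powr (- real b) * norm1 p * Mx x ^ n"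
    by (rule norm_poly_diff_le)
  also have "\<dots> \<le> 2 powr (- real b) * ((real n + 1) * 2 ^ tau p * cmod lc) * (Mx z ^ n * exp (1/2))"
  proof -
    have "norm1 p \<le> (real n + 1) * 2 ^ tau p * cmod lc"
      using norm1_le_tau[OF p_nonzero] by (simp add: n_def)
    hence "2 powr (- real b) * norm1 p \<le> 2 powr (- real b) * ((real n + 1) * 2 ^ tau p * cmod lc)"
      by (rule mult_left_mono) simp
    thus ?thesis using Mx_x Mx_ge_1[of x] norm1_nonneg[of p] by (intro mult_mono) simp_all
  qed
  also have "\<dots> = 2 powr (- real b / 2) * (16 * K * 2 powr (- real b / 2)) * cmod lc * exp (1/2) / 16"
    by (simp add: halves K_def)
  also have "\<dots> \<le> 2 powr (- real b / 2) * cmod (Pprod p z) * cmod lc * exp (1/2) / 16"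
    using Pprod by (intro divide_right_mono mult_right_mono mult_left_mono) auto
  finally show ?thesis by (simp add: r_power_order[OF z])
qed

lemma norm_poly_diff_le_near_root:
  assumes z: "z \<in> root_set p" and lo: "r z \<le> cmod (x - z)" and hi: "cmod (x - z) \<le> 2 * r z"
  shows "cmod (poly (p - ph) x) * cmod (x - z) \<le> (21/64) * r z * cmod (poly p x)"
proof -
  define m where "m = order z p"
  define t where "t = cmod (x - z)"
  define P where "P = cmod (Pprod p z)"
  have m: "m \<ge> 1" using order_ge_1[OF z] by (simp add: m_def)
  have R: "r z > 0" by (rule r_pos)
  have t: "t > 0" using lo R unfolding t_def by linarith
  have P: "P > 0" using norm_Pprod_pos by (simp add: P_def)
  have "r z ^ m * t = r z * (r z ^ (m - 1) * t)" using m by (simp add: power_eq_if)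
  also have "\<dots> \<le> r z * t ^ m"
    using power_mono[OF lo[folded t_def], of "m - 1"] R t m by (simp add: power_eq_if)
  finally have r_t: "r z ^ m * t \<le> r z * t ^ m" .
  have "cmod (poly (p - ph) x) * t \<le> r z ^ m * P * cmod lc * exp (1/2) / 16 * t"
    using norm_poly_diff_le_r_power[OF z hi] t by (intro mult_right_mono) (auto simp: m_def P_def)
  also have "\<dots> = (r z ^ m * t) * (P * cmod lc * exp (1/2) / 16)" by simp
  also have "\<dots> \<le> (r z * t ^ m) * (P * cmod lc * exp (1/2) / 16)"
    using r_t P by (intro mult_right_mono) auto
  also have "\<dots> = r z * (exp 1 * exp (1/2) / 16) * (cmod lc * t ^ m * P * exp (-1))"
    by (simp add: exp_minus field_simps)
  also have "\<dots> \<le> r z * ((21/4) / 16) * cmod (poly p x)"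
    using exp_three_halves_le norm_poly_ge_near_root[OF z hi] R t P
    by (intro mult_mono) (auto simp: t_def P_def m_def)
  finally show ?thesis by (simp add: t_def)
qed

lemma zh_not_in_annulus:
  assumes z: "z \<in> root_set p" and j: "j \<in> {1..n}"
  shows "cmod (zh j - z) \<le> r z \<or> 2 * r z < cmod (zh j - z)"
proof (rule ccontr)
  assume "\<not> ?thesis"
  hence lo: "r z \<le> cmod (zh j - z)" and hi: "cmod (zh j - z) \<le> 2 * r z" by auto
  have "poly ph (zh j) = 0" using j by (auto simp: poly_ph)
  hence diff: "cmod (poly (p - ph) (zh j)) = cmod (poly p (zh j))" by simp
  have "cmod (zh j - z) > 0" using lo r_pos[of z] by linarith
  hence "0 < cmod lc * cmod (zh j - z) ^ order z p * cmod (Pprod p z) * exp (-1)"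
    using norm_Pprod_pos[of z] p_nonzero by simp
  also have "\<dots> \<le> cmod (poly p (zh j))" by (rule norm_poly_ge_near_root[OF z hi])
  finally have "0 < cmod (poly p (zh j))" .
  moreover have "cmod (poly p (zh j)) * cmod (zh j - z) \<le> cmod (poly p (zh j)) * ((21/64) * r z)"
    using norm_poly_diff_le_near_root[OF z lo hi] unfolding diff by (simp add: mult_ac)
  ultimately have "cmod (zh j - z) \<le> (21/64) * r z" by simp
  thus False using lo r_pos[of z] by simp
qed

lemma prod_circle_poly_ph:
  assumes "t > 0" "N > 0"
  shows "(\<Prod>u\<in>circle_roots t N. cmod (poly ph (z + u)))
         = cmod lc ^ N * (\<Prod>j\<in>{1..n}. cmod (of_real t ^ N - (zh j - z) ^ N))"
proof -
  have "(\<Prod>u\<in>circle_roots t N. cmod (poly ph (z + u)))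
      = (\<Prod>u\<in>circle_roots t N. cmod lc * (\<Prod>j\<in>{1..n}. cmod (u - (zh j - z))))"
    by (intro prod.cong refl) (simp add: poly_ph norm_mult algebra_simps flip: prod_norm)
  also have "\<dots> = cmod lc ^ N * (\<Prod>u\<in>circle_roots t N. \<Prod>j\<in>{1..n}. cmod (u - (zh j - z)))"
    using assms by (simp add: prod.distrib card_circle_roots)
  also have "\<dots> = cmod lc ^ N * (\<Prod>j\<in>{1..n}. \<Prod>u\<in>circle_roots t N. cmod (u - (zh j - z)))"
    by (subst prod.swap) (rule refl)
  also have "\<dots> = cmod lc ^ N * (\<Prod>j\<in>{1..n}. cmod (of_real t ^ N - (zh j - z) ^ N))"
    using assms by (simp add: prod_circle_roots_norm_diff)
  finally show ?thesis .
qed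

lemma prod_circle_poly_p:
  assumes z: "z \<in> root_set p" and t: "t > 0" and N: "N > 0"
  shows "(\<Prod>u\<in>circle_roots t N. cmod (poly p (z + u)))
         = cmod lc ^ N * t ^ (N * order z p) *
           (\<Prod>w\<in>root_set p - {z}. cmod (of_real t ^ N - (w - z) ^ N) ^ order w p)"
proof -
  have "(\<Prod>u\<in>circle_roots t N. cmod (poly p (z + u))) = (\<Prod>u\<in>circle_roots t N.
      cmod lc * t ^ order z p * (\<Prod>w\<in>root_set p - {z}. cmod (u - (w - z)) ^ order w p))"
  proof (intro prod.cong refl)
    fix u assume "u \<in> circle_roots t N"
    hence "cmod u = t" using t N by (intro norm_circle_roots) auto
    thus "cmod (poly p (z + u))
        = cmod lc * t ^ order z p * (\<Prod>w\<in>root_set p - {z}. cmod (u - (w - z)) ^ order w p)"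
      by (simp add: poly_p_eq_root_factor[OF z] norm_mult norm_power algebra_simps flip: prod_norm)
  qed
  also have "\<dots> = cmod lc ^ N * t ^ (N * order z p) *
      (\<Prod>u\<in>circle_roots t N. \<Prod>w\<in>root_set p - {z}. cmod (u - (w - z)) ^ order w p)"
    using t N by (simp add: prod.distrib card_circle_roots power_mult_distrib power_mult mult.commute[of N])
  also have "\<dots> = cmod lc ^ N * t ^ (N * order z p) *
      (\<Prod>w\<in>root_set p - {z}. (\<Prod>u\<in>circle_roots t N. cmod (u - (w - z))) ^ order w p)"
    by (subst prod.swap) (simp add: prod_power_distrib)
  also have "\<dots> = cmod lc ^ N * t ^ (N * order z p) *
      (\<Prod>w\<in>root_set p - {z}. cmod (of_real t ^ N - (w - z) ^ N) ^ order w p)"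
    using t N by (simp add: prod_circle_roots_norm_diff)
  finally show ?thesis .
qed

lemma other_root_factor_bounds:
  assumes z: "z \<in> root_set p" and w: "w \<in> root_set p - {z}"
    and t: "0 \<le> t" "t \<le> 2 * r z" and N: "N > 0"
  shows "cmod (w - z) ^ N / 2 \<le> cmod (of_real t ^ N - (w - z) ^ N)"
    and "cmod (of_real t ^ N - (w - z) ^ N) \<le> 2 * cmod (w - z) ^ N"
proof -
  have "2 * r z \<le> real n * r z" using n_ge_2 r_pos[of z] by (intro mult_right_mono) auto
  hence "2 * t \<le> 2 * real n * r z" using t by simp
  also have "\<dots> \<le> cmod (w - z)" using two_n_r_le_dist[OF z] w by (simp add: norm_minus_commute)
  finally have far: "2 * t \<le> cmod (w - z)" .
  hence max: "max (cmod (of_real t :: complex)) (cmod (w - z)) = cmod (w - z)"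
    and min: "min (cmod (of_real t :: complex)) (cmod (w - z)) = t" using t by auto
  have "(2::real) ^ 1 \<le> 2 ^ N" using N by (intro power_increasing) auto
  hence "2 * t ^ N \<le> 2 ^ N * t ^ N" using t by (intro mult_right_mono) auto
  also have "\<dots> = (2 * t) ^ N" by (rule power_mult_distrib[symmetric])
  also have "\<dots> \<le> cmod (w - z) ^ N" using far t by (intro power_mono) auto
  finally show "cmod (w - z) ^ N / 2 \<le> cmod (of_real t ^ N - (w - z) ^ N)"
    using norm_power_diff_ge_max[of "of_real t" "w - z" N] max min by simp
  show "cmod (of_real t ^ N - (w - z) ^ N) \<le> 2 * cmod (w - z) ^ N"
    using norm_power_diff_le_max[of "of_real t" N "w - z"] max by simp
qed

lemma prod_other_root_factors_bounds:
  assumes z: "z \<in> root_set p" and t: "0 \<le> t" "t \<le> 2 * r z" and N: "N > 0"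
  defines "F \<equiv> (\<Prod>w\<in>root_set p - {z}. cmod (of_real t ^ N - (w - z) ^ N) ^ order w p)"
  shows "cmod (Pprod p z) ^ N \<le> 2 ^ n * F" and "F \<le> 2 ^ n * cmod (Pprod p z) ^ N"
proof -
  define m where "m = order z p"
  have P: "cmod (Pprod p z) = (\<Prod>w\<in>root_set p - {z}. cmod (w - z) ^ order w p)"
    unfolding norm_Pprod by (intro prod.cong refl) (simp add: norm_minus_commute)
  have F: "F \<ge> 0" by (simp add: F_def prod_nonneg)
  have "(1/2) ^ (n - m) * cmod (Pprod p z) ^ N
      = (\<Prod>w\<in>root_set p - {z}. (1/2 * cmod (w - z) ^ N) ^ order w p)"
    unfolding prod_mult_power_power sum_order_other_roots[OF z] m_def P ..
  also have "\<dots> \<le> F"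
    unfolding F_def using other_root_factor_bounds(1)[OF z _ t N]
    by (intro prod_mono conjI power_mono) auto
  finally have lower: "(1/2) ^ (n - m) * cmod (Pprod p z) ^ N \<le> F" .
  have "cmod (Pprod p z) ^ N = 2 ^ (n - m) * ((1/2) ^ (n - m) * cmod (Pprod p z) ^ N)"
    by (simp add: power_one_over)
  also have "\<dots> \<le> 2 ^ (n - m) * F"
    using lower by (rule mult_left_mono) simp
  also have "\<dots> \<le> 2 ^ n * F"
    using F by (intro mult_right_mono power_increasing) auto
  finally show "cmod (Pprod p z) ^ N \<le> 2 ^ n * F" .
  have "F \<le> (\<Prod>w\<in>root_set p - {z}. (2 * cmod (w - z) ^ N) ^ order w p)"
    unfolding F_def using other_root_factor_bounds(2)[OF z _ t N]
    by (intro prod_mono conjI power_mono) auto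
  also have "\<dots> = 2 ^ (n - m) * cmod (Pprod p z) ^ N"
    unfolding prod_mult_power_power sum_order_other_roots[OF z] m_def P ..
  also have "\<dots> \<le> 2 ^ n * cmod (Pprod p z) ^ N"
    by (intro mult_right_mono power_increasing) auto
  finally show "F \<le> 2 ^ n * cmod (Pprod p z) ^ N" .
qed

lemma prod_circle_poly_p_bounds:
  assumes z: "z \<in> root_set p" and t: "0 < t" "t \<le> 2 * r z" and N: "N > 0"
  defines "B \<equiv> (\<Prod>u\<in>circle_roots t N. cmod (poly p (z + u)))"
  defines "Q \<equiv> (cmod lc * cmod (Pprod p z)) ^ N * t ^ (N * order z p)"
  shows "Q \<le> 2 ^ n * B" and "B \<le> 2 ^ n * Q"
proof -
  define F where "F = (\<Prod>w\<in>root_set p - {z}. cmod (of_real t ^ N - (w - z) ^ N) ^ order w p)"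
  define c where "c = cmod lc ^ N * t ^ (N * order z p)"
  have c: "c \<ge> 0" using t(1) by (simp add: c_def)
  have B: "B = c * F"
    unfolding B_def F_def c_def by (rule prod_circle_poly_p[OF z t(1) N])
  have Q: "Q = c * cmod (Pprod p z) ^ N"
    by (simp add: Q_def c_def power_mult_distrib mult_ac)
  have "c * cmod (Pprod p z) ^ N \<le> c * (2 ^ n * F)"
    using prod_other_root_factors_bounds(1)[OF z _ t(2) N] t(1) c
    by (intro mult_left_mono) (simp_all add: F_def)
  thus "Q \<le> 2 ^ n * B" unfolding Q B by (simp only: mult.left_commute[of c])
  have "c * F \<le> c * (2 ^ n * cmod (Pprod p z) ^ N)"
    using prod_other_root_factors_bounds(2)[OF z _ t(2) N] t(1) c
    by (intro mult_left_mono) (simp_all add: F_def)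
  thus "B \<le> 2 ^ n * Q" unfolding Q B by (simp only: mult.left_commute[of c])
qed

lemma prod_circle_poly_ph_le:
  assumes t: "t > 0" and N: "N > 0"
  shows "(\<Prod>u\<in>circle_roots t N. cmod (poly ph (z + u)))
         \<le> 2 ^ n * (cmod lc * (\<Prod>j\<in>{1..n}. max t (cmod (zh j - z)))) ^ N"
proof -
  have "(\<Prod>j\<in>{1..n}. cmod (of_real t ^ N - (zh j - z) ^ N))
      \<le> (\<Prod>j\<in>{1..n}. 2 * max t (cmod (zh j - z)) ^ N)"
  proof (intro prod_mono conjI)
    fix j
    show "cmod (of_real t ^ N - (zh j - z) ^ N) \<le> 2 * max t (cmod (zh j - z)) ^ N"
      using norm_power_diff_le_max[of "of_real t" N "zh j - z"] t by simp
  qed simp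
  also have "\<dots> = 2 ^ n * (\<Prod>j\<in>{1..n}. max t (cmod (zh j - z))) ^ N"
    by (simp add: prod.distrib prod_power_distrib)
  finally have "cmod lc ^ N * (\<Prod>j\<in>{1..n}. cmod (of_real t ^ N - (zh j - z) ^ N))
      \<le> cmod lc ^ N * (2 ^ n * (\<Prod>j\<in>{1..n}. max t (cmod (zh j - z))) ^ N)"
    by (rule mult_left_mono) simp
  thus ?thesis by (simp add: prod_circle_poly_ph[OF t N] power_mult_distrib mult_ac)
qed

lemma prod_circle_poly_ph_ge:
  assumes t: "t > 0" and N: "N > 0"
    and apart: "\<And>j. j \<in> {1..n} \<Longrightarrow> 2 * min t (cmod (zh j - z)) ^ N \<le> max t (cmod (zh j - z)) ^ N"
  shows "(cmod lc * (\<Prod>j\<in>{1..n}. max t (cmod (zh j - z)))) ^ N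
         \<le> 2 ^ n * (\<Prod>u\<in>circle_roots t N. cmod (poly ph (z + u)))"
proof -
  have "(\<Prod>j\<in>{1..n}. max t (cmod (zh j - z))) ^ N = 2 ^ n * (\<Prod>j\<in>{1..n}. max t (cmod (zh j - z)) ^ N / 2)"
    by (simp add: prod_dividef prod_power_distrib)
  also have "\<dots> \<le> 2 ^ n * (\<Prod>j\<in>{1..n}. cmod (of_real t ^ N - (zh j - z) ^ N))"
  proof (intro mult_left_mono prod_mono conjI)
    fix j assume "j \<in> {1..n}"
    thus "max t (cmod (zh j - z)) ^ N / 2 \<le> cmod (of_real t ^ N - (zh j - z) ^ N)"
      using norm_power_diff_ge_max[of "of_real t" "zh j - z" N] apart t by simp
  qed (use t in auto)
  finally have "cmod lc ^ N * (\<Prod>j\<in>{1..n}. max t (cmod (zh j - z))) ^ N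
      \<le> cmod lc ^ N * (2 ^ n * (\<Prod>j\<in>{1..n}. cmod (of_real t ^ N - (zh j - z) ^ N)))"
    by (rule mult_left_mono) simp
  thus ?thesis by (simp add: prod_circle_poly_ph[OF t N] power_mult_distrib mult_ac)
qed

lemma mem_cluster: "j \<in> cluster z \<longleftrightarrow> j \<in> {1..n} \<and> cmod (zh j - z) \<le> r z"
  by (simp add: cluster_def dist_norm norm_minus_commute)

lemma prod_max_dist_eq:
  assumes z: "z \<in> root_set p" and t: "r z \<le> t" "t \<le> 2 * r z"
  shows "(\<Prod>j\<in>{1..n}. max t (cmod (zh j - z)))
         = t ^ card (cluster z) * (\<Prod>j\<in>{1..n} - cluster z. cmod (zh j - z))"
proof -
  have sub: "cluster z \<subseteq> {1..n}" by (auto simp: mem_cluster)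
  have "(\<Prod>j\<in>{1..n}. max t (cmod (zh j - z)))
      = (\<Prod>j\<in>{1..n} - cluster z. max t (cmod (zh j - z))) * (\<Prod>j\<in>cluster z. max t (cmod (zh j - z)))"
    using sub by (intro prod.subset_diff) auto
  also have "(\<Prod>j\<in>cluster z. max t (cmod (zh j - z))) = (\<Prod>j\<in>cluster z. t)"
    using t by (intro prod.cong refl) (auto simp: mem_cluster)
  also have "(\<Prod>j\<in>{1..n} - cluster z. max t (cmod (zh j - z))) = (\<Prod>j\<in>{1..n} - cluster z. cmod (zh j - z))"
    using t zh_not_in_annulus[OF z] by (intro prod.cong refl) (force simp: mem_cluster)
  finally show ?thesis by (simp add: mult.commute)
qed

lemma norm_poly_ph_le_inner_circle:
  assumes z: "z \<in> root_set p" and x: "cmod (x - z) = 21/20 * r z"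
  shows "cmod (poly ph x) \<le> 21/16 * cmod (poly p x)"
proof -
  have "r z \<le> cmod (x - z)" "cmod (x - z) \<le> 2 * r z" using x r_pos[of z] by simp_all
  hence "cmod (poly (p - ph) x) * cmod (x - z) \<le> (21/64) * r z * cmod (poly p x)"
    by (rule norm_poly_diff_le_near_root[OF z])
  hence "(21/20 * cmod (poly (p - ph) x)) * r z \<le> ((21/64) * cmod (poly p x)) * r z"
    unfolding x by (simp only: mult_ac)
  hence "21/20 * cmod (poly (p - ph) x) \<le> (21/64) * cmod (poly p x)"
    using r_pos[of z] by (rule mult_right_le_imp_le)
  hence "cmod (poly (p - ph) x) \<le> 5/16 * cmod (poly p x)" by simp
  moreover have "cmod (poly ph x) \<le> cmod (poly p x) + cmod (poly (p - ph) x)"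
    using norm_triangle_ineq4[of "poly p x" "poly (p - ph) x"] by simp
  ultimately show ?thesis by simp
qed

lemma norm_poly_ph_ge_outer_circle:
  assumes z: "z \<in> root_set p" and x: "cmod (x - z) = 39/20 * r z"
  shows "4/5 * cmod (poly p x) \<le> cmod (poly ph x)"
proof -
  have "r z \<le> cmod (x - z)" "cmod (x - z) \<le> 2 * r z" using x r_pos[of z] by simp_all
  hence "cmod (poly (p - ph) x) * cmod (x - z) \<le> (21/64) * r z * cmod (poly p x)"
    by (rule norm_poly_diff_le_near_root[OF z])
  hence "(39/20 * cmod (poly (p - ph) x)) * r z \<le> ((21/64) * cmod (poly p x)) * r z"
    unfolding x by (simp only: mult_ac)
  hence "39/20 * cmod (poly (p - ph) x) \<le> (21/64) * cmod (poly p x)"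
    using r_pos[of z] by (rule mult_right_le_imp_le)
  hence "cmod (poly (p - ph) x) \<le> 1/5 * cmod (poly p x)"
    using norm_ge_zero[of "poly p x"] by linarith
  moreover have "cmod (poly p x) \<le> cmod (poly ph x) + cmod (poly (p - ph) x)"
    using norm_triangle_ineq[of "poly ph x" "poly (p - ph) x"] by simp
  ultimately show ?thesis by simp
qed

lemma inner_circle_apart:
  assumes z: "z \<in> root_set p" and N: "N \<ge> 15" and j: "j \<in> {1..n}"
  defines "t \<equiv> 21/20 * r z"
  shows "2 * min t (cmod (zh j - z)) ^ N \<le> max t (cmod (zh j - z)) ^ N"
proof -
  have R: "r z > 0" by (rule r_pos)
  have t: "t > 0" "r z \<le> t" "t \<le> 2 * r z" using R by (simp_all add: t_def)
  have "(2::real) \<le> (21/20) ^ 15" by (simp add: power_divide)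
  also have "\<dots> \<le> (21/20) ^ N" using N by (intro power_increasing) auto
  finally have "2 * r z ^ N \<le> (21/20) ^ N * r z ^ N" using R by (intro mult_right_mono) auto
  hence "2 * r z ^ N \<le> t ^ N" by (simp only: t_def power_mult_distrib)
  have "(2::real) \<le> (40/21) ^ 2" by (simp add: power_divide)
  also have "\<dots> \<le> (40/21) ^ N" using N by (intro power_increasing) auto
  finally have "2 * t ^ N \<le> (40/21) ^ N * t ^ N" using t by (intro mult_right_mono) auto
  also have "\<dots> = ((40/21) * t) ^ N" by (rule power_mult_distrib[symmetric])
  also have "(40/21) * t = 2 * r z" by (simp add: t_def)
  finally have "2 * t ^ N \<le> (2 * r z) ^ N" .
  show ?thesis
  proof (cases "j \<in> cluster z")
    case True
    hence "cmod (zh j - z) \<le> r z" by (simp add: mem_cluster)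
    hence "2 * cmod (zh j - z) ^ N \<le> 2 * r z ^ N" by (simp add: power_mono)
    thus ?thesis using \<open>cmod (zh j - z) \<le> r z\<close> t \<open>2 * r z ^ N \<le> t ^ N\<close> by simp
  next
    case False
    hence "2 * r z < cmod (zh j - z)" using zh_not_in_annulus[OF z j] j by (simp add: mem_cluster)
    hence "(2 * r z) ^ N \<le> cmod (zh j - z) ^ N" using R by (intro power_mono) auto
    thus ?thesis using \<open>2 * r z < cmod (zh j - z)\<close> t \<open>2 * t ^ N \<le> (2 * r z) ^ N\<close> by simp
  qed
qed

lemma prod_inner_circle_le:
  assumes z: "z \<in> root_set p" and N: "N \<ge> 15"
  defines "t \<equiv> 21/20 * r z"
  defines "Q \<equiv> (cmod lc * cmod (Pprod p z)) ^ N"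
    and "W \<equiv> (cmod lc * (\<Prod>j\<in>{1..n} - cluster z. cmod (zh j - z))) ^ N"
  shows "t ^ (N * card (cluster z)) * W \<le> (4 ^ n * (21/16) ^ N) * t ^ (N * order z p) * Q"
proof -
  define Z where "Z = circle_roots t N"
  have R: "r z > 0" by (rule r_pos)
  have t: "t > 0" "r z \<le> t" "t \<le> 2 * r z" using R by (simp_all add: t_def)
  have N0: "N > 0" using N by simp
  have apart: "2 * min t (cmod (zh j - z)) ^ N \<le> max t (cmod (zh j - z)) ^ N" if "j \<in> {1..n}" for j
    unfolding t_def by (rule inner_circle_apart[OF z N that])
  have "(t ^ card (cluster z)) ^ N = t ^ (N * card (cluster z))"
    by (metis power_mult mult.commute)
  hence "t ^ (N * card (cluster z)) * W = (cmod lc * (\<Prod>j\<in>{1..n}. max t (cmod (zh j - z)))) ^ N"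
    unfolding prod_max_dist_eq[OF z t(2,3)] by (simp add: W_def power_mult_distrib mult_ac)
  also have "\<dots> \<le> 2 ^ n * (\<Prod>u\<in>Z. cmod (poly ph (z + u)))"
    unfolding Z_def by (rule prod_circle_poly_ph_ge[OF t(1) N0 apart])
  also have "(\<Prod>u\<in>Z. cmod (poly ph (z + u))) \<le> (\<Prod>u\<in>Z. 21/16 * cmod (poly p (z + u)))"
  proof (intro prod_mono conjI)
    fix u assume "u \<in> Z"
    hence "cmod (z + u - z) = 21/20 * r z" using norm_circle_roots[of u t N] t N0 by (simp add: Z_def t_def)
    thus "cmod (poly ph (z + u)) \<le> 21/16 * cmod (poly p (z + u))"
      by (rule norm_poly_ph_le_inner_circle[OF z])
  qed simp
  also have "\<dots> = (21/16) ^ N * (\<Prod>u\<in>Z. cmod (poly p (z + u)))"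
    unfolding Z_def by (simp only: prod.distrib prod_constant card_circle_roots[OF t(1) N0])
  also have "(\<Prod>u\<in>Z. cmod (poly p (z + u))) \<le> 2 ^ n * (Q * t ^ (N * order z p))"
    unfolding Z_def Q_def by (rule prod_circle_poly_p_bounds(2)[OF z t(1,3) N0])
  finally show ?thesis
    using power_mult_distrib[of "2::real" 2 n] by (simp add: mult_ac)
qed

lemma prod_outer_circle_ge:
  assumes z: "z \<in> root_set p" and N: "N > 0"
  defines "t \<equiv> 39/20 * r z"
  defines "Q \<equiv> (cmod lc * cmod (Pprod p z)) ^ N"
    and "W \<equiv> (cmod lc * (\<Prod>j\<in>{1..n} - cluster z. cmod (zh j - z))) ^ N"
  shows "(4/5) ^ N * t ^ (N * order z p) * Q \<le> 4 ^ n * t ^ (N * card (cluster z)) * W"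
proof -
  define Z where "Z = circle_roots t N"
  have R: "r z > 0" by (rule r_pos)
  have t: "t > 0" "r z \<le> t" "t \<le> 2 * r z" using R by (simp_all add: t_def)
  have "Q * t ^ (N * order z p) \<le> 2 ^ n * (\<Prod>u\<in>Z. cmod (poly p (z + u)))"
    unfolding Z_def Q_def by (rule prod_circle_poly_p_bounds(1)[OF z t(1,3) N])
  hence "(4/5) ^ N * t ^ (N * order z p) * Q \<le> 2 ^ n * ((4/5) ^ N * (\<Prod>u\<in>Z. cmod (poly p (z + u))))"
    using mult_left_mono[of _ _ "(4/5) ^ N :: real"] by (simp add: mult_ac)
  also have "(4/5) ^ N * (\<Prod>u\<in>Z. cmod (poly p (z + u))) = (\<Prod>u\<in>Z. 4/5 * cmod (poly p (z + u)))"
    unfolding Z_def by (simp only: prod.distrib prod_constant card_circle_roots[OF t(1) N])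
  also have "\<dots> \<le> (\<Prod>u\<in>Z. cmod (poly ph (z + u)))"
  proof (intro prod_mono conjI)
    fix u assume "u \<in> Z"
    hence "cmod (z + u - z) = 39/20 * r z" using norm_circle_roots[of u t N] t N by (simp add: Z_def t_def)
    thus "4/5 * cmod (poly p (z + u)) \<le> cmod (poly ph (z + u))"
      by (rule norm_poly_ph_ge_outer_circle[OF z])
  qed simp
  also have "\<dots> \<le> 2 ^ n * (cmod lc * (\<Prod>j\<in>{1..n}. max t (cmod (zh j - z)))) ^ N"
    unfolding Z_def by (rule prod_circle_poly_ph_le[OF t(1) N])
  also have "(cmod lc * (\<Prod>j\<in>{1..n}. max t (cmod (zh j - z)))) ^ N = t ^ (N * card (cluster z)) * W"
  proof -
    have "(t ^ card (cluster z)) ^ N = t ^ (N * card (cluster z))"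
      by (metis power_mult mult.commute)
    thus ?thesis
      unfolding prod_max_dist_eq[OF z t(2,3)] by (simp add: W_def power_mult_distrib mult_ac)
  qed
  finally show ?thesis
    using power_mult_distrib[of "2::real" 2 n] by (simp add: mult_ac)
qed

lemma order_le_card_cluster:
  assumes z: "z \<in> root_set p"
  shows "order z p \<le> card (cluster z)"
proof (rule ccontr)
  assume "\<not> ?thesis"
  hence less: "card (cluster z) < order z p" by simp
  define N where "N = 30 * n"
  define Q where "Q = (cmod lc * cmod (Pprod p z)) ^ N"
  define W where "W = (cmod lc * (\<Prod>j\<in>{1..n} - cluster z. cmod (zh j - z))) ^ N"
  have N: "N \<ge> 15" using n_ge_2 by (simp add: N_def)
  have Q: "Q > 0" using p_nonzero norm_Pprod_pos[of z] by (simp add: Q_def)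
  have "(4/5) ^ N * (39/21) ^ (N * order z p - N * card (cluster z)) \<le> (4 ^ n * (21/16) ^ N) * (4::real) ^ n"
  proof (rule power_ratio_le[of "21/20 * r z" "39/21" Q "4 ^ n" "N * card (cluster z)" "N * order z p" W])
    show "(21/20 * r z) ^ (N * card (cluster z)) * W \<le> (4 ^ n * (21/16) ^ N) * (21/20 * r z) ^ (N * order z p) * Q"
      unfolding Q_def W_def by (rule prod_inner_circle_le[OF z N])
    have "(4/5) ^ N * (39/20 * r z) ^ (N * order z p) * Q \<le> 4 ^ n * (39/20 * r z) ^ (N * card (cluster z)) * W"
      unfolding Q_def W_def using N by (intro prod_outer_circle_ge[OF z]) simp
    thus "(4/5) ^ N * (39/21 * (21/20 * r z)) ^ (N * order z p) * Q
        \<le> 4 ^ n * (39/21 * (21/20 * r z)) ^ (N * card (cluster z)) * W" by simp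
  qed (use r_pos[of z] Q less in auto)
  also have "(4 ^ n * (21/16) ^ N) * 4 ^ n = 16 ^ n * (21/16::real) ^ N"
    using power_mult_distrib[of "4::real" 4 n] by (simp add: mult_ac)
  finally have "(4/5) ^ (30 * n) * (39/21) ^ (30 * n * (order z p - card (cluster z)))
      \<le> 16 ^ n * (21/16::real) ^ (30 * n)"
    by (simp add: N_def diff_mult_distrib2)
  moreover have "n \<ge> 1" "order z p - card (cluster z) \<ge> 1" using n_ge_2 less by simp_all
  ultimately show False using two_circle_count_absurd by blast
qed

lemma cluster_disjoint:
  assumes "z \<in> root_set p" "w \<in> root_set p" "z \<noteq> w"
  shows "cluster z \<inter> cluster w = {}"
proof (rule ccontr)
  assume "cluster z \<inter> cluster w \<noteq> {}"
  then obtain j where "cmod (zh j - z) \<le> r z" "cmod (zh j - w) \<le> r w"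
    by (auto simp: mem_cluster)
  moreover have "cmod (z - w) \<le> cmod (zh j - z) + cmod (zh j - w)"
    using norm_triangle_ineq4[of "zh j - w" "zh j - z"] by (simp add: norm_minus_commute)
  moreover have "2 * real n * r z \<le> cmod (z - w)" "2 * real n * r w \<le> cmod (z - w)"
    using two_n_r_le_dist[of z w] two_n_r_le_dist[of w z] assms norm_minus_commute[of w z] by auto
  moreover have "4 * r z \<le> 2 * real n * r z" "4 * r w \<le> 2 * real n * r w"
    using n_ge_2 r_pos[of z] r_pos[of w] by (auto intro: mult_right_mono)
  moreover have "0 < cmod (z - w)" using assms by simp
  ultimately show False by linarith
qed

lemma card_cluster_eq_order:
  assumes z: "z \<in> root_set p"
  shows "card (cluster z) = order z p"
proof (rule ccontr)
  assume "card (cluster z) \<noteq> order z p"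
  hence "order z p < card (cluster z)" using order_le_card_cluster[OF z] by simp
  hence "(\<Sum>w\<in>root_set p. order w p) < (\<Sum>w\<in>root_set p. card (cluster w))"
    using finite_root_set z order_le_card_cluster by (intro sum_strict_mono_ex1) auto
  also have "\<dots> = card (\<Union>w\<in>root_set p. cluster w)"
    using finite_root_set cluster_disjoint
    by (intro card_UN_disjoint[symmetric]) (auto simp: cluster_def)
  also have "\<dots> \<le> card {1..n}" by (intro card_mono) (auto simp: cluster_def)
  finally show False using n_eq_sum_order by simp
qed

lemma dist_cluster_points:
  assumes z: "z \<in> root_set p" and w: "w \<in> root_set p" "z \<noteq> w"
    and j: "j \<in> cluster z" and l: "l \<in> cluster w"
  shows "(1 - 1 / real n) * cmod (z - w) \<le> cmod (zh j - zh l)"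
    and "cmod (zh j - zh l) \<le> (1 + 1 / real n) * cmod (z - w)"
proof -
  have n: "real n > 0" using n_ge_2 by simp
  have "2 * real n * r z \<le> cmod (z - w)" "2 * real n * r w \<le> cmod (z - w)"
    using two_n_r_le_dist[OF z w(1)] two_n_r_le_dist[OF w(1) z] w(2) norm_minus_commute[of w z] by auto
  hence "real n * (r z + r w) \<le> cmod (z - w)" by (simp add: algebra_simps)
  hence rs: "r z + r w \<le> cmod (z - w) / real n" using n by (simp add: field_simps)
  have j': "cmod (zh j - z) \<le> r z" and l': "cmod (zh l - w) \<le> r w"
    using j l by (simp_all add: mem_cluster)
  have "cmod (zh j - zh l) \<le> cmod ((z - w) + (zh j - z)) + cmod (zh l - w)"
    using norm_triangle_ineq4[of "(z - w) + (zh j - z)" "zh l - w"] by simp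
  hence upper: "cmod (zh j - zh l) \<le> cmod (z - w) + cmod (zh j - z) + cmod (zh l - w)"
    using norm_triangle_ineq[of "z - w" "zh j - z"] by linarith
  have "cmod (z - w) \<le> cmod ((zh j - zh l) - (zh j - z)) + cmod (zh l - w)"
    using norm_triangle_ineq[of "(zh j - zh l) - (zh j - z)" "zh l - w"] by simp
  hence lower: "cmod (z - w) - cmod (zh j - z) - cmod (zh l - w) \<le> cmod (zh j - zh l)"
    using norm_triangle_ineq4[of "zh j - zh l" "zh j - z"] by linarith
  have "(1 - 1 / real n) * cmod (z - w) = cmod (z - w) - cmod (z - w) / real n"
    by (simp add: algebra_simps)
  thus "(1 - 1 / real n) * cmod (z - w) \<le> cmod (zh j - zh l)"
    using lower rs j' l' by linarith
  have "(1 + 1 / real n) * cmod (z - w) = cmod (z - w) + cmod (z - w) / real n"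
    by (simp add: algebra_simps)
  thus "cmod (zh j - zh l) \<le> (1 + 1 / real n) * cmod (z - w)"
    using upper rs j' l' by linarith
qed

end

theorem lemma7:
  fixes p :: "complex poly" and zh :: "nat \<Rightarrow> complex" and b :: nat
  defines "n \<equiv> degree p"
  defines "ph \<equiv> smult (lead_coeff p) (\<Prod>j\<in>{1..n}. [:- zh j, 1:])"
  defines "r \<equiv> (\<lambda>z. (2::real) powr (- real b / (2 * real (order z p))))"
  assumes n2: "n \<ge> 2"
    and k2: "card (root_set p) \<ge> 2"
    and close: "norm1 (p - ph) \<le> 2 powr (- real b) * norm1 p"
    and bpow: "\<exists>t::nat. b = 2 ^ t"
    and bbig: "real b \<ge> max (8 * real n) (real n * log 2 (real n))"
    and c1: "\<And>z. z \<in> root_set p \<Longrightarrow> r z \<le> 1 / (2 * real n ^ 2)"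
    and c2: "\<And>z. z \<in> root_set p \<Longrightarrow> r z \<le> sep p z / (2 * real n)"
    and c3: "\<And>z. z \<in> root_set p \<Longrightarrow>
              2 powr (- real b / 2) \<le> cmod (Pprod p z) / (16 * (real n + 1) * 2 ^ tau p * Mx z ^ n)"
  shows "(\<forall>z\<in>root_set p. card {j\<in>{1..n}. zh j \<in> cball z (r z)} = order z p) \<and>
         (\<forall>z\<in>root_set p. \<forall>w\<in>root_set p. z \<noteq> w \<longrightarrow>
            (\<forall>j\<in>{1..n}. \<forall>l\<in>{1..n}. zh j \<in> cball z (r z) \<longrightarrow> zh l \<in> cball w (r w) \<longrightarrow>
               (1 - 1 / real n) * cmod (z - w) \<le> cmod (zh j - zh l) \<and>
               cmod (zh j - zh l) \<le> (1 + 1 / real n) * cmod (z - w)))"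
proof -
  interpret approx_roots p zh b n ph r
  proof
    show "n = degree p" "ph = smult (lead_coeff p) (\<Prod>j\<in>{1..n}. [:- zh j, 1:])"
      "r = (\<lambda>z. 2 powr (- real b / (2 * real (order z p))))"
      by (simp_all add: n_def ph_def r_def)
  qed (fact n2 close c1 c2 c3)+
  show ?thesis
    using card_cluster_eq_order dist_cluster_points by (auto simp: cluster_def)
qed

end
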